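(* Let $L$ be a right pre-Lie algebra over $k$ and let $(S(L),\ast)$ be the Guin--Oudom presentation of its enveloping algebra. For arbitrary $l_1,\ldots,l_n\in L$ one has, in $S(L)$, $$ l_1\cdots l_n=\sum_{\{P_1,\ldots,P_k\}}(-1)^{n-k}\,l_{P_1}\ast\cdots\ast l_{P_k}, $$ where the left-hand side is the commutative product in $S(L)$, the sum runs over all set partitions $\{P_1,\ldots,P_k\}$ of $\{1,\ldots,n\}$ with blocks indexed so that $\max P_1<\max P_2<\cdots<\max P_k$, and for a block $P_i=\{p_1<\cdots<p_h\}$, $$ l_{P_i}:=\sum_{\sigma\in S_{h-1}} l_{p_{\sigma(1)}}\curvearrowleft\Big(l_{p_{\sigma(2)}}\curvearrowleft\big(\cdots\curvearrowleft(l_{p_{\sigma(h-1)}}\curvearrowleft l_{p_h})\cdots\big)\Big) $$ (for $h=1$, $l_{P_i}=l_{p_1}$).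
   Context: $k$ is a field of characteristic zero. A right pre-Lie algebra is a vector space $L$ with a bilinear product $\curvearrowleft$ satisfying $(x\curvearrowleft y)\curvearrowleft z-x\curvearrowleft(y\curvearrowleft z)=(x\curvearrowleft z)\curvearrowleft y-x\curvearrowleft(z\curvearrowleft y)$ for all $x,y,z\in L$. $S(L)$ is the symmetric algebra on $L$ (commutative product written as juxtaposition, unit $1$). The pre-Lie product is extended to an action of $S(L)$ on $L$ recursively: $l\curvearrowleft 1=l$ and, for $l,l_1,\ldots,l_n\in L$, $l\curvearrowleft(l_1\cdots l_n)=(l\curvearrowleft(l_1\cdots l_{n-1}))\curvearrowleft l_n-\sum_{i=1}^{n-1}l\curvearrowleft(l_1\cdots l_{i-1}(l_i\curvearrowleft l_n)l_{i+1}\cdots l_{n-1})$. The Guin--Oudom product $\ast$ on $S(L)$ is the bilinear product with unit $1$ given by $(a_1\cdots a_n)\ast(b_1\cdots b_m)=\sum_f B_0\,(a_1\curvearrowleft B_1)\cdots(a_n\curvearrowleft B_n)$ for $a_i,b_j\in L$, the sum over all maps $f:\{1,\ldots,m\}\to\{0,\ldots,n\}$, with $B_i=\prod_{j\in f^{-1}(i)}b_j$ (empty product $=1$). It is associative and $(S(L),\ast)$ is isomorphic to the universal enveloping algebra of the Lie algebra $(L,[a,b]=a\curvearrowleft b-b\curvearrowleft a)$. *)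

theory Defs
  imports Main "HOL-Library.Multiset" "HOL-Library.Poly_Mapping" "HOL-Library.Disjoint_Sets"
    "HOL-Combinatorics.Multiset_Permutations"
begin

definition right_pre_Lie :: "('k::field \<Rightarrow> 'l::ab_group_add \<Rightarrow> 'l) \<Rightarrow> ('l \<Rightarrow> 'l \<Rightarrow> 'l) \<Rightarrow> bool" where
  "right_pre_Lie scale pl \<longleftrightarrow> vector_space scale
   \<and> (\<forall>x y z. pl (x + y) z = pl x z + pl y z)
   \<and> (\<forall>x y z. pl x (y + z) = pl x y + pl x z)
   \<and> (\<forall>c x y. pl (scale c x) y = scale c (pl x y))
   \<and> (\<forall>c x y. pl x (scale c y) = scale c (pl x y))
   \<and> (\<forall>x y z. pl (pl x y) z - pl x (pl y z) = pl (pl x z) y - pl x (pl z y))"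

text \<open>Free commutative k-algebra on the underlying set of L: polynomials whose monomials
  are finite multisets of elements of L.  S(L) is its quotient by the ideal symI.\<close>
definition Xv :: "'l \<Rightarrow> ('l multiset \<Rightarrow>\<^sub>0 'k::comm_semiring_1)" where
  "Xv a = Poly_Mapping.single {#a#} 1"

definition Cst :: "'k::comm_semiring_1 \<Rightarrow> ('l multiset \<Rightarrow>\<^sub>0 'k)" where
  "Cst c = Poly_Mapping.single {#} c"

definition mon :: "'l list \<Rightarrow> ('l multiset \<Rightarrow>\<^sub>0 'k::comm_semiring_1)" where
  "mon xs = prod_list (map Xv xs)"

inductive_set symI :: "('k::field \<Rightarrow> 'l::ab_group_add \<Rightarrow> 'l) \<Rightarrow> ('l multiset \<Rightarrow>\<^sub>0 'k) set"
  for scale where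
  zero: "0 \<in> symI scale"
| add: "p \<in> symI scale \<Longrightarrow> q \<in> symI scale \<Longrightarrow> p + q \<in> symI scale"
| gen_add: "r * (Xv (a + b) - Xv a - Xv b) \<in> symI scale"
| gen_scale: "r * (Xv (scale c a) - Cst c * Xv a) \<in> symI scale"

definition eqS :: "('k::field \<Rightarrow> 'l::ab_group_add \<Rightarrow> 'l) \<Rightarrow> ('l multiset \<Rightarrow>\<^sub>0 'k) \<Rightarrow> ('l multiset \<Rightarrow>\<^sub>0 'k) \<Rightarrow> bool" where
  "eqS scale p q \<longleftrightarrow> p - q \<in> symI scale"

text \<open>Extended action l \<curvearrowleft> (l_1 ... l_n), with the list given in reverse order:
  actr pl a (l_n # rev [l_1,...,l_{n-1}]).\<close>
function actr :: "('l \<Rightarrow> 'l \<Rightarrow> 'l::ab_group_add) \<Rightarrow> 'l \<Rightarrow> 'l list \<Rightarrow> 'l" where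
  "actr pl a [] = a"
| "actr pl a (y # xs) = pl (actr pl a xs) y - (\<Sum>i<length xs. actr pl a (xs[i := pl (xs ! i) y]))"
  by pat_completeness auto
termination by (relation "measure (\<lambda>(pl, a, ys). length ys)") auto

definition act :: "('l \<Rightarrow> 'l \<Rightarrow> 'l::ab_group_add) \<Rightarrow> 'l \<Rightarrow> 'l list \<Rightarrow> 'l" where
  "act pl a ys = actr pl a (rev ys)"

definition blk :: "nat list \<Rightarrow> 'l list \<Rightarrow> nat \<Rightarrow> 'l list" where
  "blk fs bs i = map snd (filter (\<lambda>(f, b). f = i) (zip fs bs))"

definition go_mon :: "('l \<Rightarrow> 'l \<Rightarrow> 'l::ab_group_add) \<Rightarrow> 'l list \<Rightarrow> 'l list \<Rightarrow> ('l multiset \<Rightarrow>\<^sub>0 'k::comm_ring_1)" where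
  "go_mon pl as bs =
     (\<Sum>fs\<in>{fs. length fs = length bs \<and> set fs \<subseteq> {0..length as}}.
        mon (blk fs bs 0) * (\<Prod>i\<in>{1..length as}. Xv (act pl (as ! (i - 1)) (blk fs bs i))))"

definition lst :: "'l multiset \<Rightarrow> 'l list" where
  "lst m = (SOME xs. mset xs = m)"

definition gop :: "('l \<Rightarrow> 'l \<Rightarrow> 'l::ab_group_add) \<Rightarrow> ('l multiset \<Rightarrow>\<^sub>0 'k::comm_ring_1)
     \<Rightarrow> ('l multiset \<Rightarrow>\<^sub>0 'k) \<Rightarrow> ('l multiset \<Rightarrow>\<^sub>0 'k)" where
  "gop pl p q = (\<Sum>m\<in>Poly_Mapping.keys p. \<Sum>m'\<in>Poly_Mapping.keys q.
      Cst (Poly_Mapping.lookup p m * Poly_Mapping.lookup q m') * go_mon pl (lst m) (lst m'))"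

text \<open>l_P for a block P of indices into ls (0-based).\<close>
definition lP :: "('l \<Rightarrow> 'l \<Rightarrow> 'l::ab_group_add) \<Rightarrow> 'l list \<Rightarrow> nat set \<Rightarrow> 'l" where
  "lP pl ls P = (\<Sum>qs\<in>permutations_of_set (P - {Max P}).
       foldr (\<lambda>i acc. pl (ls ! i) acc) qs (ls ! Max P))"

definition ordered_blocks :: "nat set set \<Rightarrow> nat set list" where
  "ordered_blocks P = map (\<lambda>m. THE B. B \<in> P \<and> Max B = m) (sorted_list_of_set (Max ` P))"

end

theory Submission
  imports Defs
begin

(* For a generator z, right multiplication p |-> p * z sends a monomial m to
   z m + sum_{a in m} (a <| z) (m - a); it is linear and maps the linearity relations into
   themselves, so it is well defined on S(L).  Induct on the index set I, splitting off the block B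
   containing n = max I: the right-hand side R(I) equals
   sum_B (-1)^(|B|-1) R(I - B) * l_B, which by induction is congruent to
   sum_B (-1)^(|B|-1) (l_B l_{I-B} + sum_{j notin B} (l_j <| l_B) l_{I-B-j}).
   For B ~= {n} expand l_B = sum_{i in B-{n}} l_i <| l_{B-i}; the resulting terms cancel those of
   the second kind in pairs (B, i) <-> (B - {i}, i), and only l_I, from B = {n}, survives. *)

abbreviation monom :: "'l multiset \<Rightarrow> ('l multiset \<Rightarrow>\<^sub>0 'k::comm_semiring_1)" where
  "monom m \<equiv> Poly_Mapping.single m 1"

lemma Xv_mult_monom: "Xv a * monom m = monom (add_mset a m)"
  by (simp add: Xv_def mult_single)

lemma monom_mult_Xv: "monom m * Xv a = (monom (add_mset a m) :: 'l multiset \<Rightarrow>\<^sub>0 'k::comm_semiring_1)"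
  by (simp add: Xv_def mult_single)

lemma mon_eq_monom: "mon xs = monom (mset xs)"
  by (induction xs) (simp_all add: mon_def Xv_mult_monom)

lemma prod_list_map_conv_prod_lessThan:
  "prod_list (map g xs) = (\<Prod>i<length xs. (g (xs ! i) :: 'a::comm_monoid_mult))"
  by (induction xs) (simp_all add: prod.lessThan_Suc_shift del: prod.lessThan_Suc)

lemma Cst_add: "Cst (a + b) = Cst a + Cst b"
  by (simp add: Cst_def single_add)

lemma Cst_mult: "Cst (a * b) = Cst a * Cst b"
  by (simp add: Cst_def mult_single)

lemma Cst_zero [simp]: "Cst 0 = 0"
  by (simp add: Cst_def)

lemma Cst_one [simp]: "Cst 1 = 1"
  by (simp add: Cst_def)

lemma Cst_mult_single: "Cst c * Poly_Mapping.single m d = Poly_Mapping.single m (c * d)"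
  by (simp add: Cst_def mult_single)

lemma lookup_Cst_mult: "Poly_Mapping.lookup (Cst c * p) m = c * Poly_Mapping.lookup p m"
proof -
  have "Cst c * p = Poly_Mapping.map ((*) c) p"
    by (simp add: Cst_def mult_map_scale_conv_mult)
  then show ?thesis by (simp add: map.rep_eq when_def)
qed

lemma keys_Cst_mult: "Poly_Mapping.keys (Cst c * p) \<subseteq> Poly_Mapping.keys p"
  by (auto simp: in_keys_iff lookup_Cst_mult)

lemma poly_mapping_sum_single_lookup:
  "p = (\<Sum>m\<in>Poly_Mapping.keys p. Poly_Mapping.single m (Poly_Mapping.lookup p m))"
  by (rule poly_mapping_eqI) (simp add: lookup_sum lookup_single when_def in_keys_iff)

lemma mset_lst: "mset (lst m) = m"
  unfolding lst_def by (rule someI_ex) (rule ex_mset)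

lemma lst_single: "lst {#z#} = [z]"
  using mset_lst[of "{#z#}"] by simp

lemma act_Nil: "act pl a [] = a"
  by (simp add: act_def)

lemma act_single: "act pl a [z] = pl a z"
  by (simp add: act_def)

lemma blk_single: "blk [j] [z] i = (if j = i then [z] else [])"
  by (simp add: blk_def)

subsection \<open>Right multiplication by a generator\<close>

definition right_act_mon :: "('l \<Rightarrow> 'l \<Rightarrow> 'l::ab_group_add) \<Rightarrow> 'l \<Rightarrow> 'l multiset
    \<Rightarrow> ('l multiset \<Rightarrow>\<^sub>0 'k::comm_ring_1)" where
  "right_act_mon pl z m = (\<Sum>a\<in>#m. monom (add_mset (pl a z) (m - {#a#})))"

definition right_mult_mon :: "('l \<Rightarrow> 'l \<Rightarrow> 'l::ab_group_add) \<Rightarrow> 'l \<Rightarrow> 'l multiset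
    \<Rightarrow> ('l multiset \<Rightarrow>\<^sub>0 'k::comm_ring_1)" where
  "right_mult_mon pl z m = monom (add_mset z m) + right_act_mon pl z m"

definition right_mult :: "('l \<Rightarrow> 'l \<Rightarrow> 'l::ab_group_add) \<Rightarrow> 'l
    \<Rightarrow> ('l multiset \<Rightarrow>\<^sub>0 'k::comm_ring_1) \<Rightarrow> ('l multiset \<Rightarrow>\<^sub>0 'k)" where
  "right_mult pl z p = (\<Sum>m\<in>Poly_Mapping.keys p. Cst (Poly_Mapping.lookup p m) * right_mult_mon pl z m)"

text \<open>With a single right factor z, a map f either keeps z as a new factor (f = 0) or lets it
  act on the j-th factor of the left monomial (f = j).\<close>

lemma go_mon_single:
  "go_mon pl as [z] = (right_mult_mon pl z (mset as) :: 'l::ab_group_add multiset \<Rightarrow>\<^sub>0 'k::comm_ring_1)"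
proof -
  let ?n = "length as"
  let ?t = "\<lambda>fs. (mon (blk fs [z] 0) * (\<Prod>i\<in>{1..?n}. Xv (act pl (as ! (i - 1)) (blk fs [z] i)))
     :: 'l multiset \<Rightarrow>\<^sub>0 'k)"
  have maps: "{fs. length fs = length [z] \<and> set fs \<subseteq> {0..?n}} = (\<lambda>j. [j]) ` {0..?n}"
    by (auto simp: length_Suc_conv)
  have "go_mon pl as [z] = (\<Sum>j\<in>{0..?n}. ?t [j])"
    unfolding go_mon_def maps by (subst sum.reindex) (auto simp: inj_on_def)
  also have "\<dots> = ?t [0] + (\<Sum>j\<in>{1..?n}. ?t [j])"
    by (simp add: sum.atLeast_Suc_atMost)
  also have "?t [0] = monom (add_mset z (mset as))"
  proof -
    have "(\<Prod>i\<in>{1..?n}. Xv (act pl (as ! (i - 1)) (blk [0] [z] i))) = (mon as :: 'l multiset \<Rightarrow>\<^sub>0 'k)"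
      unfolding mon_def prod_list_map_conv_prod_lessThan
      by (rule prod.reindex_bij_witness[where i="\<lambda>i. i + 1" and j="\<lambda>i. i - 1"])
         (auto simp: blk_single act_Nil)
    then show ?thesis by (simp add: blk_single mon_eq_monom mon_def[of "[z]"] mult_single)
  qed
  also have "(\<Sum>j\<in>{1..?n}. ?t [j]) = right_act_mon pl z (mset as)"
  proof -
    have "?t [j] = mon (as[j - 1 := pl (as ! (j - 1)) z])" if "j \<in> {1..?n}" for j
    proof -
      have "(\<Prod>i\<in>{1..?n}. Xv (act pl (as ! (i - 1)) (blk [j] [z] i)))
          = (mon (as[j - 1 := pl (as ! (j - 1)) z]) :: 'l multiset \<Rightarrow>\<^sub>0 'k)"
        unfolding mon_def prod_list_map_conv_prod_lessThan
        by (rule prod.reindex_bij_witness[where i="\<lambda>i. i + 1" and j="\<lambda>i. i - 1"])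
           (use that in \<open>auto simp: blk_single act_Nil act_single nth_list_update\<close>)
      then show ?thesis using that by (simp add: blk_single mon_def)
    qed
    then have "(\<Sum>j\<in>{1..?n}. ?t [j]) = (\<Sum>j\<in>{1..?n}. mon (as[j - 1 := pl (as ! (j - 1)) z]))"
      by (intro sum.cong) simp_all
    also have "\<dots> = (\<Sum>j<?n. mon (as[j := pl (as ! j) z]))"
      by (rule sum.reindex_bij_witness[where i="\<lambda>i. i + 1" and j="\<lambda>i. i - 1"]) auto
    also have "\<dots> = (\<Sum>j<?n. monom (add_mset (pl (as ! j) z) (mset as - {#as ! j#})))"
      by (rule sum.cong) (auto simp: mon_eq_monom mset_update)
    also have "\<dots> = sum_list (map (\<lambda>a. monom (add_mset (pl a z) (mset as - {#a#}))) as)"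
      by (simp add: sum_list_sum_nth atLeast0LessThan)
    also have "\<dots> = right_act_mon pl z (mset as)"
      unfolding right_act_mon_def by (simp only: sum_mset_sum_list[symmetric] mset_map)
    finally show ?thesis .
  qed
  finally show ?thesis by (simp add: right_mult_mon_def)
qed

lemma gop_Xv: "gop pl p (Xv z) = right_mult pl z (p :: 'l::ab_group_add multiset \<Rightarrow>\<^sub>0 'k::comm_ring_1)"
  by (simp add: gop_def right_mult_def Xv_def lst_single go_mon_single mset_lst)

lemma right_mult_superset:
  assumes "finite S" "Poly_Mapping.keys p \<subseteq> S"
  shows "right_mult pl z p = (\<Sum>m\<in>S. Cst (Poly_Mapping.lookup p m) * right_mult_mon pl z m)"
  unfolding right_mult_def
  by (rule sum.mono_neutral_left) (use assms in \<open>auto simp: in_keys_iff\<close>)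

lemma right_mult_add: "right_mult pl z (p + q) = right_mult pl z p + right_mult pl z q"
proof -
  let ?S = "Poly_Mapping.keys p \<union> Poly_Mapping.keys q"
  have f: "finite ?S" by simp
  have "right_mult pl z (p + q) = (\<Sum>m\<in>?S. Cst (Poly_Mapping.lookup (p + q) m) * right_mult_mon pl z m)"
    by (rule right_mult_superset[OF f]) (rule keys_add)
  also have "\<dots> = (\<Sum>m\<in>?S. Cst (Poly_Mapping.lookup p m) * right_mult_mon pl z m)
      + (\<Sum>m\<in>?S. Cst (Poly_Mapping.lookup q m) * right_mult_mon pl z m)"
    by (simp add: lookup_add Cst_add distrib_right sum.distrib)
  also have "\<dots> = right_mult pl z p + right_mult pl z q"
    by (simp add: right_mult_superset[OF f])
  finally show ?thesis .
qed

lemma right_mult_zero [simp]: "right_mult pl z 0 = 0"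
  by (simp add: right_mult_def)

lemma right_mult_uminus: "right_mult pl z (- p) = - right_mult pl z p"
  using right_mult_add[of pl z p "- p"] by (simp add: eq_neg_iff_add_eq_0 add.commute)

lemma right_mult_diff: "right_mult pl z (p - q) = right_mult pl z p - right_mult pl z q"
  using right_mult_add[of pl z p "- q"] by (simp add: right_mult_uminus)

lemma right_mult_sum: "right_mult pl z (sum g A) = (\<Sum>a\<in>A. right_mult pl z (g a))"
  by (induction A rule: infinite_finite_induct) (simp_all add: right_mult_add)

lemma right_mult_Cst_mult: "right_mult pl z (Cst c * p) = Cst c * right_mult pl z p"
proof -
  have "right_mult pl z (Cst c * p)
      = (\<Sum>m\<in>Poly_Mapping.keys p. Cst (Poly_Mapping.lookup (Cst c * p) m) * right_mult_mon pl z m)"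
    by (rule right_mult_superset) (simp_all add: keys_Cst_mult)
  then show ?thesis
    by (simp add: right_mult_def lookup_Cst_mult Cst_mult sum_distrib_left mult.assoc)
qed

lemma right_mult_single: "right_mult pl z (Poly_Mapping.single m c) = Cst c * right_mult_mon pl z m"
  by (simp add: right_mult_def)

lemma right_act_mon_add_mset:
  "(right_act_mon pl z (add_mset x m) :: 'l::ab_group_add multiset \<Rightarrow>\<^sub>0 'k::comm_ring_1)
     = right_act_mon pl z m * Xv x + monom m * Xv (pl x z)"
proof -
  have "(\<Sum>a\<in>#m. (monom (add_mset (pl a z) (add_mset x m - {#a#})) :: 'l multiset \<Rightarrow>\<^sub>0 'k))
      = (\<Sum>a\<in>#m. monom (add_mset (pl a z) (m - {#a#})) * Xv x)"
    by (intro arg_cong[where f=sum_mset] image_mset_cong)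
       (simp add: insert_DiffM2 monom_mult_Xv add_mset_commute)
  then show ?thesis
    by (simp add: right_act_mon_def sum_mset_distrib_right monom_mult_Xv add.commute)
qed

lemma right_mult_mon_add_mset:
  "(right_mult_mon pl z (add_mset x m) :: 'l::ab_group_add multiset \<Rightarrow>\<^sub>0 'k::comm_ring_1)
     = right_mult_mon pl z m * Xv x + monom m * Xv (pl x z)"
  by (simp add: right_mult_mon_def right_act_mon_add_mset distrib_right monom_mult_Xv
      add_mset_commute)

subsection \<open>The symmetric algebra as a quotient\<close>

lemma symI_mult: "p \<in> symI scale \<Longrightarrow> q * p \<in> symI scale"
proof (induction rule: symI.induct)
  case zero then show ?case by (simp add: symI.zero)
next
  case (add p p') then show ?case by (simp add: distrib_left symI.add)
next
  case (gen_add r a b)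
  show ?case using symI.gen_add[of "q * r"] by (simp only: mult.assoc)
next
  case (gen_scale r c a)
  show ?case using symI.gen_scale[of "q * r"] by (simp only: mult.assoc)
qed

lemma symI_uminus: "p \<in> symI scale \<Longrightarrow> - p \<in> symI scale"
  using symI_mult[of p scale "-1"] by simp

lemma symI_sum: "(\<And>a. a \<in> A \<Longrightarrow> g a \<in> symI scale) \<Longrightarrow> sum g A \<in> symI scale"
  by (induction A rule: infinite_finite_induct) (simp_all add: symI.zero symI.add)

lemma eqS_refl: "eqS scale p p"
  by (simp add: eqS_def symI.zero)

lemma eqS_sym: "eqS scale p q \<Longrightarrow> eqS scale q p"
  unfolding eqS_def using symI_uminus by fastforce

lemma eqS_trans [trans]: "eqS scale p q \<Longrightarrow> eqS scale q r \<Longrightarrow> eqS scale p r"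
  unfolding eqS_def using symI.add by fastforce

lemma eqS_add: "eqS scale p q \<Longrightarrow> eqS scale p' q' \<Longrightarrow> eqS scale (p + p') (q + q')"
  unfolding eqS_def using symI.add by (fastforce simp: algebra_simps)

lemma eqS_mult_left: "eqS scale p q \<Longrightarrow> eqS scale (r * p) (r * q)"
  unfolding eqS_def using symI_mult by (fastforce simp: algebra_simps)

lemma eqS_sum: "(\<And>a. a \<in> A \<Longrightarrow> eqS scale (f a) (g a)) \<Longrightarrow> eqS scale (sum f A) (sum g A)"
  by (induction A rule: infinite_finite_induct) (simp_all add: eqS_refl eqS_add)

lemma eqS_Xv_add: "eqS scale (Xv (a + b)) (Xv a + Xv b)"
  using symI.gen_add[of 1 a b] by (simp add: eqS_def algebra_simps)

lemma Xv_zero_in_symI: "Xv 0 \<in> symI scale"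
  using symI_uminus[OF symI.gen_add[of 1 0 0]] by simp

lemma eqS_Xv_sum: "eqS scale (Xv (sum g A)) (\<Sum>a\<in>A. Xv (g a))"
proof (induction A rule: infinite_finite_induct)
  case (infinite A)
  then show ?case using Xv_zero_in_symI by (simp add: eqS_def)
next
  case empty
  then show ?case using Xv_zero_in_symI by (simp add: eqS_def)
next
  case (insert x F)
  have "eqS scale (Xv (g x + sum g F)) (Xv (g x) + Xv (sum g F))"
    by (rule eqS_Xv_add)
  also have "eqS scale \<dots> (Xv (g x) + (\<Sum>a\<in>F. Xv (g a)))"
    by (rule eqS_add[OF eqS_refl insert.IH])
  finally show ?case using insert by simp
qed

lemma right_mult_symI_from_monom:
  assumes "\<And>m. right_mult pl z (monom m * g) \<in> symI scale"
  shows "right_mult pl z (r * g) \<in> symI scale"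
proof -
  have "r * g = (\<Sum>m\<in>Poly_Mapping.keys r. Cst (Poly_Mapping.lookup r m) * (monom m * g))"
    by (subst poly_mapping_sum_single_lookup[of r])
       (simp add: sum_distrib_right Cst_mult_single flip: mult.assoc)
  then show ?thesis
    by (simp add: right_mult_sum right_mult_Cst_mult symI_sum symI_mult assms)
qed

locale left_linear_biadditive =
  fixes scale :: "'k::field \<Rightarrow> 'l::ab_group_add \<Rightarrow> 'l" and pl :: "'l \<Rightarrow> 'l \<Rightarrow> 'l"
  assumes add_left: "pl (x + y) z = pl x z + pl y z"
    and scale_left: "pl (scale c x) y = scale c (pl x y)"
    and add_right: "pl x (y + z) = pl x y + pl x z"
begin

lemma sum_right: "pl x (sum g A) = (\<Sum>a\<in>A. pl x (g a))"
proof (induction A rule: infinite_finite_induct)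
  case (infinite A)
  then show ?case using add_right[of x 0 0] by simp
next
  case empty
  then show ?case using add_right[of x 0 0] by simp
qed (simp add: add_right)

lemma right_mult_symI: "p \<in> symI scale \<Longrightarrow> right_mult pl z (p :: 'l multiset \<Rightarrow>\<^sub>0 'k) \<in> symI scale"
proof (induction rule: symI.induct)
  case zero then show ?case by (simp add: symI.zero)
next
  case (add p p') then show ?case by (simp add: right_mult_add symI.add)
next
  case (gen_add r a b)
  show ?case
  proof (rule right_mult_symI_from_monom)
    fix m
    have "monom m * (Xv (a + b) - Xv a - Xv b)
        = (monom (add_mset (a + b) m) - monom (add_mset a m) - monom (add_mset b m)
            :: 'l multiset \<Rightarrow>\<^sub>0 'k)"
      by (simp add: right_diff_distrib monom_mult_Xv)
    then have "right_mult pl z (monom m * (Xv (a + b) - Xv a - Xv b) :: 'l multiset \<Rightarrow>\<^sub>0 'k)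
        = right_mult_mon pl z m * (Xv (a + b) - Xv a - Xv b)
          + monom m * (Xv (pl a z + pl b z) - Xv (pl a z) - Xv (pl b z))"
      by (simp add: right_mult_diff right_mult_single right_mult_mon_add_mset add_left
          right_diff_distrib)
    then show "right_mult pl z (monom m * (Xv (a + b) - Xv a - Xv b)) \<in> symI scale"
      by (simp add: symI.add symI.gen_add)
  qed
next
  case (gen_scale r c a)
  show ?case
  proof (rule right_mult_symI_from_monom)
    fix m
    have "monom m * (Xv (scale c a) - Cst c * Xv a)
        = (monom (add_mset (scale c a) m) - Cst c * monom (add_mset a m) :: 'l multiset \<Rightarrow>\<^sub>0 'k)"
      by (simp add: right_diff_distrib monom_mult_Xv mult.left_commute[of "monom m"])
    then have "right_mult pl z (monom m * (Xv (scale c a) - Cst c * Xv a) :: 'l multiset \<Rightarrow>\<^sub>0 'k)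
        = right_mult_mon pl z m * (Xv (scale c a) - Cst c * Xv a)
          + monom m * (Xv (scale c (pl a z)) - Cst c * Xv (pl a z))"
      by (simp add: right_mult_diff right_mult_single right_mult_Cst_mult right_mult_mon_add_mset
          scale_left right_diff_distrib distrib_left mult.left_commute[of "Cst c"])
    then show "right_mult pl z (monom m * (Xv (scale c a) - Cst c * Xv a)) \<in> symI scale"
      by (simp add: symI.add symI.gen_scale)
  qed
qed

lemma right_mult_eqS: "eqS scale p q \<Longrightarrow> eqS scale (right_mult pl z p) (right_mult pl z q)"
  unfolding eqS_def right_mult_diff[symmetric] by (rule right_mult_symI)

lemma lP_remove:
  assumes "finite B" "n \<in> B" "\<forall>x\<in>B. x \<le> n" "B \<noteq> {n}"
  shows "lP pl ls B = (\<Sum>i\<in>B - {n}. pl (ls ! i) (lP pl ls (B - {i})))"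
proof -
  have Max_B: "Max B = n" using assms by (intro Max_eqI) auto
  have Max_Bi: "Max (B - {i}) = n" if "i \<in> B - {n}" for i
    using assms that by (intro Max_eqI) auto
  let ?F = "\<lambda>qs. foldr (\<lambda>i acc. pl (ls ! i) acc) qs (ls ! n)"
  have ne: "B - {n} \<noteq> {}" using assms by auto
  have "lP pl ls B = sum ?F (\<Union>i\<in>B - {n}. (#) i ` permutations_of_set (B - {n} - {i}))"
    unfolding lP_def Max_B permutations_of_set_nonempty[OF ne] ..
  also have "\<dots> = (\<Sum>i\<in>B - {n}. sum ?F ((#) i ` permutations_of_set (B - {n} - {i})))"
    by (rule sum.UNION_disjoint) (use assms in auto)
  also have "\<dots> = (\<Sum>i\<in>B - {n}. \<Sum>qs\<in>permutations_of_set (B - {n} - {i}). pl (ls ! i) (?F qs))"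
    by (rule sum.cong) (simp_all add: sum.reindex)
  also have "\<dots> = (\<Sum>i\<in>B - {n}. pl (ls ! i) (lP pl ls (B - {i})))"
  proof (rule sum.cong)
    fix i assume i: "i \<in> B - {n}"
    then have "B - {i} - {Max (B - {i})} = B - {n} - {i}" using Max_Bi by auto
    then show "(\<Sum>qs\<in>permutations_of_set (B - {n} - {i}). pl (ls ! i) (?F qs))
        = pl (ls ! i) (lP pl ls (B - {i}))"
      unfolding lP_def sum_right using Max_Bi[OF i] by simp
  qed simp
  finally show ?thesis .
qed

end

subsection \<open>Set partitions\<close>

lemma card_partition_on_le:
  assumes "finite I" "partition_on I P"
  shows "card P \<le> card I"
proof -
  have fin: "finite B" if "B \<in> P" for B
    using assms that by (auto simp: partition_on_def intro: finite_subset)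
  have "card P = (\<Sum>B\<in>P. 1)" by simp
  also have "\<dots> \<le> (\<Sum>B\<in>P. card B)"
    by (rule sum_mono) (use assms fin in \<open>auto simp: partition_on_def Suc_le_eq card_gt_0_iff\<close>)
  also have "\<dots> = card I"
    using product_partition[OF assms(2) fin] by simp
  finally show ?thesis .
qed

lemma partition_on_insert_block:
  assumes "partition_on (I - B) Q" "B \<subseteq> I" "B \<noteq> {}"
  shows "partition_on I (insert B Q)" "B \<notin> Q"
proof -
  have "disjnt B (\<Union>Q)" using assms(1) by (auto simp: partition_on_def disjnt_def)
  then show "partition_on I (insert B Q)" using assms by (simp add: partition_on_insert Diff_partition)
  show "B \<notin> Q" using assms by (auto simp: partition_on_def)
qed

lemma block_containing_insert:
  assumes "partition_on (I - B) Q" "n \<in> B"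
  shows "(THE B'. B' \<in> insert B Q \<and> n \<in> B') = B"
  using assms by (intro the_equality) (auto simp: partition_on_def)

lemma block_containing:
  assumes "partition_on I P" "n \<in> I"
  defines "B \<equiv> THE B. B \<in> P \<and> n \<in> B"
  shows "B \<in> P" "n \<in> B" "B \<subseteq> I" "partition_on (I - B) (P - {B})"
proof -
  have "\<exists>!B. B \<in> P \<and> n \<in> B"
    using assms(1,2) by (auto simp: partition_on_def disjoint_def)
  then show B: "B \<in> P" "n \<in> B" unfolding B_def by (metis (mono_tags, lifting) theI)+
  then show "B \<subseteq> I" using assms(1) by (auto simp: partition_on_def)
  have "disjnt B (\<Union>(P - {B}))"
    using assms(1) B by (auto simp: partition_on_def disjoint_def disjnt_def)
  then show "partition_on (I - B) (P - {B})"
    using assms(1) partition_on_insert[of B "P - {B}" I] B by (simp add: insert_absorb)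
qed

lemma sum_partition_on_block_containing:
  assumes "finite I" "n \<in> I"
  shows "(\<Sum>P\<in>{P. partition_on I P}. h P) =
    (\<Sum>B\<in>{B. B \<subseteq> I \<and> n \<in> B}. \<Sum>Q\<in>{Q. partition_on (I - B) Q}. h (insert B Q))"
proof -
  let ?blk = "\<lambda>P. THE B. B \<in> P \<and> n \<in> B"
  have "(\<Sum>B\<in>{B. B \<subseteq> I \<and> n \<in> B}. \<Sum>Q\<in>{Q. partition_on (I - B) Q}. h (insert B Q)) =
     (\<Sum>(B, Q)\<in>(SIGMA B:{B. B \<subseteq> I \<and> n \<in> B}. {Q. partition_on (I - B) Q}). h (insert B Q))"
    by (rule sum.Sigma) (use assms in \<open>auto intro: finitely_many_partition_on\<close>)
  also have "\<dots> = (\<Sum>P\<in>{P. partition_on I P}. h P)"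
  proof (rule sum.reindex_bij_witness[where i="\<lambda>P. (?blk P, P - {?blk P})" and j="\<lambda>(B, Q). insert B Q"])
    fix BQ assume "BQ \<in> (SIGMA B:{B. B \<subseteq> I \<and> n \<in> B}. {Q. partition_on (I - B) Q})"
    then obtain B Q where BQ: "BQ = (B, Q)" "B \<subseteq> I" "n \<in> B" "partition_on (I - B) Q" by auto
    then have "B \<noteq> {}" by auto
    note ins = partition_on_insert_block[OF BQ(4,2) this]
    show "(?blk ((\<lambda>(B, Q). insert B Q) BQ), (\<lambda>(B, Q). insert B Q) BQ - {?blk ((\<lambda>(B, Q). insert B Q) BQ)}) = BQ"
      using block_containing_insert[OF BQ(4,3)] ins(2) BQ(1) by simp
    show "(\<lambda>(B, Q). insert B Q) BQ \<in> {P. partition_on I P}"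
      using ins(1) BQ(1) by simp
  next
    fix P assume "P \<in> {P. partition_on I P}"
    then have P: "partition_on I P" by simp
    note blk = block_containing[OF P assms(2)]
    show "(\<lambda>(B, Q). insert B Q) (?blk P, P - {?blk P}) = P"
      using blk(1) by auto
    show "(?blk P, P - {?blk P}) \<in> (SIGMA B:{B. B \<subseteq> I \<and> n \<in> B}. {Q. partition_on (I - B) Q})"
      using blk(2-4) by simp
  qed auto
  finally show ?thesis by simp
qed

lemma sorted_list_of_set_insert_greater:
  assumes "finite S" "\<forall>s\<in>S. s < (n::nat)"
  shows "sorted_list_of_set (insert n S) = sorted_list_of_set S @ [n]"
proof -
  have "insort n xs = xs @ [n]" if "\<forall>x\<in>set xs. x < n" for xs
    using that by (induction xs) auto
  moreover have "n \<notin> S" using assms by auto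
  ultimately show ?thesis using assms by (simp add: sorted_list_of_set_insert)
qed

lemma ordered_blocks_insert_max:
  assumes Q: "partition_on (I - B) Q" and "finite I" "B \<subseteq> I" "n \<in> B" "\<forall>x\<in>I. x \<le> n"
  shows "ordered_blocks (insert B Q) = ordered_blocks Q @ [B]"
proof -
  have Max_B: "Max B = n" using assms by (intro Max_eqI) (auto intro: finite_subset)
  have finQ: "finite Q" using Q assms by (meson finite_Diff finite_elements)
  have Max_less: "Max C < n" if "C \<in> Q" for C
  proof -
    have C: "C \<subseteq> I - B" "C \<noteq> {}" using Q that by (auto simp: partition_on_def)
    moreover have "finite C" using C assms by (meson finite_Diff finite_subset)
    ultimately have "Max C \<in> C" by simp
    then show ?thesis using C assms by (metis Diff_iff le_neq_implies_less subsetD)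
  qed
  have sorted: "sorted_list_of_set (Max ` insert B Q) = sorted_list_of_set (Max ` Q) @ [n]"
    unfolding image_insert Max_B
    by (rule sorted_list_of_set_insert_greater) (use finQ Max_less in auto)
  have "(THE C. C \<in> insert B Q \<and> Max C = m) = (THE C. C \<in> Q \<and> Max C = m)"
    if "m \<in> Max ` Q" for m
  proof -
    have "m \<noteq> n" using that Max_less by auto
    then have "(C \<in> insert B Q \<and> Max C = m) = (C \<in> Q \<and> Max C = m)" for C using Max_B by auto
    then show ?thesis by simp
  qed
  moreover have "(THE C. C \<in> insert B Q \<and> Max C = n) = B"
  proof (rule the_equality)
    fix C assume "C \<in> insert B Q \<and> Max C = n"
    then show "C = B" using Max_less by (metis insertE less_irrefl)
  qed (simp add: Max_B)
  ultimately show ?thesis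
    unfolding ordered_blocks_def sorted using finQ by simp
qed

subsection \<open>The signed sum over partitions\<close>

definition indexed_mset :: "'l list \<Rightarrow> nat set \<Rightarrow> 'l multiset" where
  "indexed_mset ls J = image_mset (nth ls) (mset_set J)"

definition block_product :: "('l \<Rightarrow> 'l \<Rightarrow> 'l::ab_group_add) \<Rightarrow> 'l list \<Rightarrow> nat set set
    \<Rightarrow> ('l multiset \<Rightarrow>\<^sub>0 'k::comm_ring_1)" where
  "block_product pl ls P = foldl (\<lambda>acc x. gop pl acc (Xv x)) 1 (map (lP pl ls) (ordered_blocks P))"

definition partition_sum :: "('l \<Rightarrow> 'l \<Rightarrow> 'l::ab_group_add) \<Rightarrow> 'l list \<Rightarrow> nat set
    \<Rightarrow> ('l multiset \<Rightarrow>\<^sub>0 'k::comm_ring_1)" where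
  "partition_sum pl ls I =
     (\<Sum>P\<in>{P. partition_on I P}. Cst ((-1) ^ (card I - card P)) * block_product pl ls P)"

definition block_sign :: "nat set \<Rightarrow> 'k::comm_ring_1" where
  "block_sign B = (-1) ^ (card B - 1)"

definition absorbed_monom :: "('l \<Rightarrow> 'l \<Rightarrow> 'l::ab_group_add) \<Rightarrow> 'l list \<Rightarrow> nat set \<Rightarrow> nat set
    \<Rightarrow> nat \<Rightarrow> ('l multiset \<Rightarrow>\<^sub>0 'k::comm_ring_1)" where
  "absorbed_monom pl ls I B j =
     monom (add_mset (pl (ls ! j) (lP pl ls B)) (indexed_mset ls (I - B - {j})))"

lemma block_sign_Diff_singleton:
  assumes "finite B" "i \<in> B" "n \<in> B" "i \<noteq> n"
  shows "block_sign (B - {i}) = - block_sign B"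
proof -
  have "2 \<le> card B" using card_mono[of B "{i, n}"] assms by simp
  then obtain k where "card B = 2 + k" using le_Suc_ex by blast
  moreover have "card (B - {i}) = card B - 1" using assms by simp
  ultimately show ?thesis by (simp add: block_sign_def)
qed

lemma indexed_mset_remove:
  "finite J \<Longrightarrow> j \<in> J \<Longrightarrow> indexed_mset ls J = add_mset (ls ! j) (indexed_mset ls (J - {j}))"
  unfolding indexed_mset_def by (subst mset_set.remove) auto

lemma indexed_mset_all: "indexed_mset ls {0..<length ls} = mset ls"
proof -
  have "indexed_mset ls {0..<length ls} = mset (map (nth ls) [0..<length ls])"
    by (simp add: indexed_mset_def mset_upt)
  then show ?thesis by (simp add: map_nth)
qed

lemma block_product_insert_max:
  assumes "partition_on (I - B) Q" "finite I" "B \<subseteq> I" "n \<in> B" "\<forall>x\<in>I. x \<le> n"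
  shows "block_product pl ls (insert B Q) = right_mult pl (lP pl ls B) (block_product pl ls Q)"
  unfolding block_product_def ordered_blocks_insert_max[OF assms] by (simp add: gop_Xv)

lemma partition_sum_split_max:
  assumes I: "finite I" "n \<in> I" "\<forall>x\<in>I. x \<le> n"
  shows "partition_sum pl ls I =
    (\<Sum>B\<in>{B. B \<subseteq> I \<and> n \<in> B}. Cst (block_sign B) * right_mult pl (lP pl ls B) (partition_sum pl ls (I - B)))"
  unfolding partition_sum_def[of pl ls I] sum_partition_on_block_containing[OF I(1,2)]
proof (rule sum.cong[OF refl])
  fix B assume "B \<in> {B. B \<subseteq> I \<and> n \<in> B}"
  then have B: "B \<subseteq> I" "n \<in> B" by auto
  have "finite B" using B I by (auto intro: finite_subset)
  then have card_I: "card I = card (I - B) + card B" "card B \<ge> 1"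
    using B I by (auto simp: card_Diff_subset card_mono Suc_le_eq card_gt_0_iff)
  have summand: "Cst ((-1) ^ (card I - card (insert B Q))) * block_product pl ls (insert B Q)
      = Cst (block_sign B) * (Cst ((-1) ^ (card (I - B) - card Q))
          * right_mult pl (lP pl ls B) (block_product pl ls Q))"
    if Q: "partition_on (I - B) Q" for Q
  proof -
    have "B \<notin> Q" using partition_on_insert_block[OF Q] B by auto
    moreover have "finite Q" using Q I by (meson finite_Diff finite_elements)
    moreover have "card Q \<le> card (I - B)" using card_partition_on_le[OF _ Q] I by simp
    ultimately have "card I - card (insert B Q) = (card (I - B) - card Q) + (card B - 1)"
      using card_I by simp
    then show ?thesis
      by (simp add: block_product_insert_max[OF Q I(1) B I(3)] block_sign_def power_add
          Cst_mult mult_ac)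
  qed
  show "(\<Sum>Q\<in>{Q. partition_on (I - B) Q}.
        Cst ((-1) ^ (card I - card (insert B Q))) * block_product pl ls (insert B Q))
      = Cst (block_sign B) * right_mult pl (lP pl ls B) (partition_sum pl ls (I - B))"
    unfolding partition_sum_def right_mult_sum right_mult_Cst_mult sum_distrib_left
    by (rule sum.cong[OF refl]) (simp add: summand)
qed

lemma right_mult_indexed_mset:
  assumes "finite J"
  shows "right_mult pl z (monom (indexed_mset ls J)) =
    monom (add_mset z (indexed_mset ls J))
    + (\<Sum>j\<in>J. monom (add_mset (pl (ls ! j) z) (indexed_mset ls (J - {j}))))"
proof -
  have "right_act_mon pl z (indexed_mset ls J)
      = (\<Sum>j\<in>J. monom (add_mset (pl (ls ! j) z) (indexed_mset ls J - {#ls ! j#})))"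
    unfolding right_act_mon_def
    by (simp add: indexed_mset_def sum_unfold_sum_mset image_mset.compositionality comp_def)
  also have "\<dots> = (\<Sum>j\<in>J. monom (add_mset (pl (ls ! j) z) (indexed_mset ls (J - {j}))))"
    by (rule sum.cong[OF refl]) (simp add: indexed_mset_remove[OF assms])
  finally show ?thesis by (simp add: right_mult_single right_mult_mon_def)
qed

text \<open>(B, i) \<mapsto> (B - {i}, i) matches the terms of the two sums, and the sign of B - {i}
  is opposite to that of B.\<close>

lemma absorbed_monoms_cancel:
  fixes pl :: "'l \<Rightarrow> 'l \<Rightarrow> 'l::ab_group_add"
  assumes I: "finite I" "n \<in> I"
  shows "(\<Sum>B\<in>{B. B \<subseteq> I \<and> n \<in> B \<and> B \<noteq> {n}}.
            Cst (block_sign B) * (\<Sum>i\<in>B - {n}. absorbed_monom pl ls I (B - {i}) i))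
       = - (\<Sum>B\<in>{B. B \<subseteq> I \<and> n \<in> B}.
            Cst (block_sign B) * (\<Sum>j\<in>I - B. absorbed_monom pl ls I B j :: 'l multiset \<Rightarrow>\<^sub>0 'k::comm_ring_1))"
proof -
  let ?S2 = "SIGMA B:{B. B \<subseteq> I \<and> n \<in> B \<and> B \<noteq> {n}}. B - {n}"
  let ?S1 = "SIGMA B:{B. B \<subseteq> I \<and> n \<in> B}. I - B"
  have "(\<Sum>B\<in>{B. B \<subseteq> I \<and> n \<in> B \<and> B \<noteq> {n}}.
          Cst (block_sign B) * (\<Sum>i\<in>B - {n}. absorbed_monom pl ls I (B - {i}) i))
      = (\<Sum>(B, i)\<in>?S2. Cst (block_sign B) * absorbed_monom pl ls I (B - {i}) i)"
    unfolding sum_distrib_left by (rule sum.Sigma) (use I in \<open>auto intro: finite_subset\<close>)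
  also have "\<dots> = (\<Sum>(B, j)\<in>?S1. - (Cst (block_sign B) * absorbed_monom pl ls I B j))"
    by (rule sum.reindex_bij_witness[where j="\<lambda>(B, i). (B - {i}, i)" and i="\<lambda>(B, j). (insert j B, j)"])
       (auto simp: insert_absorb block_sign_Diff_singleton finite_subset[OF _ I(1)] Cst_def
          single_uminus)
  also have "\<dots> = - (\<Sum>B\<in>{B. B \<subseteq> I \<and> n \<in> B}.
            Cst (block_sign B) * (\<Sum>j\<in>I - B. absorbed_monom pl ls I B j))"
    unfolding sum_distrib_left sum_negf[symmetric]
    by (subst sum.Sigma) (use I in \<open>auto simp: case_prod_unfold\<close>)
  finally show ?thesis .
qed

context left_linear_biadditive
begin

lemma monom_lP_eqS_absorbed_monoms:
  assumes I: "finite I" and B: "B \<subseteq> I" "n \<in> B" and n: "\<forall>x\<in>I. x \<le> n" and ne: "B \<noteq> {n}"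
  shows "eqS scale (monom (add_mset (lP pl ls B) (indexed_mset ls (I - B))) :: 'l multiset \<Rightarrow>\<^sub>0 'k)
           (\<Sum>i\<in>B - {n}. absorbed_monom pl ls I (B - {i}) i)"
proof -
  let ?m = "indexed_mset ls (I - B)"
  have "finite B" "\<forall>x\<in>B. x \<le> n" using B I n by (auto intro: finite_subset)
  then have "(monom (add_mset (lP pl ls B) ?m) :: 'l multiset \<Rightarrow>\<^sub>0 'k)
      = monom ?m * Xv (\<Sum>i\<in>B - {n}. pl (ls ! i) (lP pl ls (B - {i})))"
    using lP_remove[of B n ls] B ne by (simp add: monom_mult_Xv)
  also have "eqS scale \<dots> (monom ?m * (\<Sum>i\<in>B - {n}. Xv (pl (ls ! i) (lP pl ls (B - {i})))))"
    by (rule eqS_mult_left[OF eqS_Xv_sum])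
  also have "monom ?m * (\<Sum>i\<in>B - {n}. Xv (pl (ls ! i) (lP pl ls (B - {i}))))
      = (\<Sum>i\<in>B - {n}. absorbed_monom pl ls I (B - {i}) i)"
    unfolding sum_distrib_left
  proof (rule sum.cong[OF refl])
    fix i assume "i \<in> B - {n}"
    then have "I - (B - {i}) - {i} = I - B" using B by auto
    then show "monom ?m * Xv (pl (ls ! i) (lP pl ls (B - {i}))) = absorbed_monom pl ls I (B - {i}) i"
      by (simp add: absorbed_monom_def monom_mult_Xv)
  qed
  finally show ?thesis .
qed

lemma signed_block_sum_eqS_monom:
  assumes I: "finite I" "n \<in> I" "\<forall>x\<in>I. x \<le> n"
  shows "eqS scale (\<Sum>B\<in>{B. B \<subseteq> I \<and> n \<in> B}. Cst (block_sign B) *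
      (monom (add_mset (lP pl ls B) (indexed_mset ls (I - B)))
        + (\<Sum>j\<in>I - B. absorbed_monom pl ls I B j)) :: 'l multiset \<Rightarrow>\<^sub>0 'k)
    (monom (indexed_mset ls I))"
proof -
  let ?Bs = "{B. B \<subseteq> I \<and> n \<in> B}"
  let ?Bs' = "{B. B \<subseteq> I \<and> n \<in> B \<and> B \<noteq> {n}}"
  let ?U = "\<lambda>B. (monom (add_mset (lP pl ls B) (indexed_mset ls (I - B))) :: 'l multiset \<Rightarrow>\<^sub>0 'k)"
  let ?X = "\<lambda>B. (\<Sum>j\<in>I - B. absorbed_monom pl ls I B j :: 'l multiset \<Rightarrow>\<^sub>0 'k)"
  let ?Y = "\<lambda>B. (\<Sum>i\<in>B - {n}. absorbed_monom pl ls I (B - {i}) i :: 'l multiset \<Rightarrow>\<^sub>0 'k)"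
  have Bs: "?Bs = insert {n} ?Bs'" and "finite ?Bs'" using I by auto
  have "?U {n} = monom (indexed_mset ls I)"
    using indexed_mset_remove[OF I(1,2), of ls] by (simp add: lP_def)
  then have "(\<Sum>B\<in>?Bs. Cst (block_sign B) * ?U B)
      = monom (indexed_mset ls I) + (\<Sum>B\<in>?Bs'. Cst (block_sign B) * ?U B)"
    unfolding Bs using \<open>finite ?Bs'\<close> by (simp add: block_sign_def)
  then have split: "(\<Sum>B\<in>?Bs. Cst (block_sign B) * (?U B + ?X B))
      = monom (indexed_mset ls I) + (\<Sum>B\<in>?Bs'. Cst (block_sign B) * ?U B)
        + (\<Sum>B\<in>?Bs. Cst (block_sign B) * ?X B)"
    by (simp add: distrib_left sum.distrib)
  have cong: "eqS scale (\<Sum>B\<in>?Bs'. Cst (block_sign B) * ?U B) (\<Sum>B\<in>?Bs'. Cst (block_sign B) * ?Y B)"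
  proof (intro eqS_sum eqS_mult_left)
    fix B assume "B \<in> ?Bs'"
    then show "eqS scale (?U B) (?Y B)"
      using I by (intro monom_lP_eqS_absorbed_monoms) auto
  qed
  have "eqS scale (monom (indexed_mset ls I) + (\<Sum>B\<in>?Bs'. Cst (block_sign B) * ?U B)
        + (\<Sum>B\<in>?Bs. Cst (block_sign B) * ?X B))
      (monom (indexed_mset ls I) + (\<Sum>B\<in>?Bs'. Cst (block_sign B) * ?Y B)
        + (\<Sum>B\<in>?Bs. Cst (block_sign B) * ?X B))"
    by (intro eqS_add eqS_refl cong)
  then show ?thesis
    unfolding split by (simp add: absorbed_monoms_cancel[OF I(1,2)])
qed

lemma partition_sum_eqS_monom:
  assumes "finite I"
  shows "eqS scale (partition_sum pl ls I :: 'l multiset \<Rightarrow>\<^sub>0 'k) (monom (indexed_mset ls I))"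
  using assms
proof (induction I rule: finite_psubset_induct)
  case (psubset I)
  show ?case
  proof (cases "I = {}")
    case True
    then show ?thesis
      by (simp add: partition_sum_def partition_on_empty block_product_def ordered_blocks_def
          indexed_mset_def eqS_refl)
  next
    case False
    define n where "n = Max I"
    have I: "finite I" "n \<in> I" "\<forall>x\<in>I. x \<le> n" using psubset(1) False by (auto simp: n_def)
    let ?Bs = "{B. B \<subseteq> I \<and> n \<in> B}"
    have "partition_sum pl ls I =
        (\<Sum>B\<in>?Bs. Cst (block_sign B) * right_mult pl (lP pl ls B) (partition_sum pl ls (I - B)))"
      by (rule partition_sum_split_max[OF I])
    also have "eqS scale \<dots>
        (\<Sum>B\<in>?Bs. Cst (block_sign B) * right_mult pl (lP pl ls B) (monom (indexed_mset ls (I - B))))"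
      by (intro eqS_sum eqS_mult_left right_mult_eqS psubset.IH) auto
    also have "\<dots> = (\<Sum>B\<in>?Bs. Cst (block_sign B) *
        (monom (add_mset (lP pl ls B) (indexed_mset ls (I - B))) + (\<Sum>j\<in>I - B. absorbed_monom pl ls I B j)))"
      using I by (intro sum.cong refl) (simp add: right_mult_indexed_mset absorbed_monom_def)
    also have "eqS scale \<dots> (monom (indexed_mset ls I))"
      by (rule signed_block_sum_eqS_monom[OF I])
    finally show ?thesis .
  qed
qed

end

lemma right_pre_Lie_left_linear_biadditive:
  "right_pre_Lie scale pl \<Longrightarrow> left_linear_biadditive scale pl"
  by (simp add: right_pre_Lie_def left_linear_biadditive_def)

theorem proposition2p1:
  fixes scale :: "'k::field_char_0 \<Rightarrow> 'l::ab_group_add \<Rightarrow> 'l"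
    and pl :: "'l \<Rightarrow> 'l \<Rightarrow> 'l"
    and ls :: "'l list"
  assumes "right_pre_Lie scale pl"
  shows "eqS scale (mon ls)
     (\<Sum>P\<in>{P. partition_on {0..<length ls} P}.
        Cst ((-1) ^ (length ls - card P)) *
        foldl (\<lambda>acc x. gop pl acc (Xv x)) 1 (map (lP pl ls) (ordered_blocks P)))"
proof -
  interpret left_linear_biadditive scale pl
    using assms by (rule right_pre_Lie_left_linear_biadditive)
  have "eqS scale (partition_sum pl ls {0..<length ls}) (mon ls)"
    using partition_sum_eqS_monom[of "{0..<length ls}" ls]
    by (simp add: indexed_mset_all mon_eq_monom)
  then show ?thesis
    by (auto simp: partition_sum_def block_product_def dest: eqS_sym)
qed

end
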